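(* Let $(\mathcal A,h,D)$ be an essentially discrete spectral triple and let $P_0$ be the orthogonal projection onto $\ker D$. For every $a\in\mathcal A$ there exist operators $\alpha_0,\beta_0\in B(h)$ with $\|\alpha_0\|=\|\beta_0\|=\|[D,a]\|$ such that \[ [P_0,a]=P_0\,\alpha_0\,|D|^{-1}+|D|^{-1}\beta_0\,P_0 . \]
   Context: A spectral triple $(\mathcal A,h,D)$ consists of a Hilbert space $h$, a densely defined self-adjoint operator $D$ on $h$, and a $*$-algebra $\mathcal A\subseteq B(h)$ such that every $a\in\mathcal A$ preserves the domain of $D$ and $[D,a]$ extends to a bounded operator on $h$. It is called essentially discrete if $\sigma(D)\setminus\{0\}$ is discrete; i.e. with $P_0$ the projection onto $\ker D$ (which may be infinite dimensional), the restriction of $D$ to $(I-P_0)h$ has compact inverse there. Convention: $D^{-1}$ and $|D|^{-1}$ denote the operators that vanish identically on $\ker D$ and are given by the usual functional calculus on $(I-P_0)h$ (so they are compact); similarly for $|D|^{-1/2}$. *)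

theory Defs
  imports "HOL-Analysis.Analysis"
begin

class chilbert = banach +
  fixes scaleC :: "complex \<Rightarrow> 'a \<Rightarrow> 'a"
    and cinner :: "'a \<Rightarrow> 'a \<Rightarrow> complex"
  assumes scaleC_of_real: "scaleC (complex_of_real r) x = scaleR r x"
    and scaleC_add_right: "scaleC c (x + y) = scaleC c x + scaleC c y"
    and scaleC_add_left: "scaleC (c + d) x = scaleC c x + scaleC d x"
    and scaleC_mult: "scaleC (c * d) x = scaleC c (scaleC d x)"
    and scaleC_one: "scaleC 1 x = x"
    and cinner_commute: "cinner x y = cnj (cinner y x)"
    and cinner_add_right: "cinner x (y + z) = cinner x y + cinner x z"
    and cinner_scaleC_right: "cinner x (scaleC c y) = c * cinner x y"
    and cinner_ge_zero: "Im (cinner x x) = 0 \<and> Re (cinner x x) \<ge> 0"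
    and norm_eq_sqrt_cinner: "norm x = sqrt (Re (cinner x x))"

definition clinear :: "('h::chilbert \<Rightarrow> 'h) \<Rightarrow> bool" where
  "clinear f \<longleftrightarrow> (\<forall>x y. f (x + y) = f x + f y) \<and> (\<forall>c x. f (scaleC c x) = scaleC c (f x))"

definition bop :: "('h::chilbert \<Rightarrow> 'h) \<Rightarrow> bool" where
  "bop f \<longleftrightarrow> clinear f \<and> (\<exists>K. \<forall>x. norm (f x) \<le> norm x * K)"

definition is_adjoint :: "('h::chilbert \<Rightarrow> 'h) \<Rightarrow> ('h \<Rightarrow> 'h) \<Rightarrow> bool" where
  "is_adjoint f g \<longleftrightarrow> (\<forall>x y. cinner (f x) y = cinner x (g y))"

definition compact_op :: "('h::chilbert \<Rightarrow> 'h) \<Rightarrow> bool" where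
  "compact_op f \<longleftrightarrow> bop f \<and> compact (closure (f ` {x. norm x \<le> 1}))"

definition star_algebra :: "('h::chilbert \<Rightarrow> 'h) set \<Rightarrow> bool" where
  "star_algebra A \<longleftrightarrow> (\<forall>a\<in>A. bop a) \<and> (\<lambda>x. 0) \<in> A \<and>
     (\<forall>a\<in>A. \<forall>b\<in>A. (\<lambda>x. a x + b x) \<in> A \<and> a \<circ> b \<in> A) \<and>
     (\<forall>a\<in>A. \<forall>c. (\<lambda>x. scaleC c (a x)) \<in> A) \<and>
     (\<forall>a\<in>A. \<exists>b\<in>A. is_adjoint a b)"

definition self_adjoint_op :: "'h::chilbert set \<Rightarrow> ('h \<Rightarrow> 'h) \<Rightarrow> bool" where
  "self_adjoint_op domD D \<longleftrightarrow>
     0 \<in> domD \<and> (\<forall>x\<in>domD. \<forall>y\<in>domD. x + y \<in> domD) \<and> (\<forall>c. \<forall>x\<in>domD. scaleC c x \<in> domD) \<and>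
     closure domD = UNIV \<and>
     (\<forall>x\<in>domD. \<forall>y\<in>domD. D (x + y) = D x + D y) \<and>
     (\<forall>c. \<forall>x\<in>domD. D (scaleC c x) = scaleC c (D x)) \<and>
     (\<forall>x\<in>domD. \<forall>y\<in>domD. cinner (D x) y = cinner x (D y)) \<and>
     (\<forall>y. (\<exists>z. \<forall>x\<in>domD. cinner (D x) y = cinner x z) \<longrightarrow> y \<in> domD)"

definition spectral_triple :: "('h::chilbert \<Rightarrow> 'h) set \<Rightarrow> 'h set \<Rightarrow> ('h \<Rightarrow> 'h) \<Rightarrow> bool" where
  "spectral_triple A domD D \<longleftrightarrow> star_algebra A \<and> self_adjoint_op domD D \<and>
     (\<forall>a\<in>A. a ` domD \<subseteq> domD \<and>
        (\<exists>C. bop C \<and> (\<forall>x\<in>domD. C x = D (a x) - a (D x))))"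

definition ker_op :: "'h::chilbert set \<Rightarrow> ('h \<Rightarrow> 'h) \<Rightarrow> 'h set" where
  "ker_op domD D = {x\<in>domD. D x = 0}"

definition orth_proj_onto :: "('h::chilbert \<Rightarrow> 'h) \<Rightarrow> 'h set \<Rightarrow> bool" where
  "orth_proj_onto P S \<longleftrightarrow> bop P \<and> (\<forall>x. P x \<in> S) \<and> (\<forall>x. \<forall>s\<in>S. cinner s (x - P x) = 0)"

text \<open>T is D^{-1} in the paper's convention: zero on ker D, inverse of D on (I-P0)h.\<close>
definition is_Dinv :: "'h::chilbert set \<Rightarrow> ('h \<Rightarrow> 'h) \<Rightarrow> ('h \<Rightarrow> 'h) \<Rightarrow> ('h \<Rightarrow> 'h) \<Rightarrow> bool" where
  "is_Dinv domD D P0 T \<longleftrightarrow> bop T \<and> (\<forall>x. T (P0 x) = 0) \<and>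
     (\<forall>y. T y \<in> domD \<and> D (T y) = y - P0 y) \<and> (\<forall>x\<in>domD. T (D x) = x - P0 x)"

definition essentially_discrete :: "'h::chilbert set \<Rightarrow> ('h \<Rightarrow> 'h) \<Rightarrow> bool" where
  "essentially_discrete domD D \<longleftrightarrow>
     (\<exists>P0 T. orth_proj_onto P0 (ker_op domD D) \<and> is_Dinv domD D P0 T \<and> compact_op T)"

definition positive_op :: "('h::chilbert \<Rightarrow> 'h) \<Rightarrow> bool" where
  "positive_op R \<longleftrightarrow> bop R \<and> (\<forall>x. Im (cinner x (R x)) = 0 \<and> Re (cinner x (R x)) \<ge> 0)"

text \<open>R is |D|^{-1}: the (unique) positive square root of (D^{-1})^2, i.e. the functional
calculus of lambda |-> 1/|lambda| (0 at 0).\<close>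
definition is_absDinv :: "'h::chilbert set \<Rightarrow> ('h \<Rightarrow> 'h) \<Rightarrow> ('h \<Rightarrow> 'h) \<Rightarrow> ('h \<Rightarrow> 'h) \<Rightarrow> bool" where
  "is_absDinv domD D P0 R \<longleftrightarrow> (\<exists>T. is_Dinv domD D P0 T \<and> positive_op R \<and> R \<circ> R = T \<circ> T)"

end

theory Submission
  imports Defs
begin

text \<open>Write \<open>T = D\<^sup>-\<^sup>1\<close> and \<open>C = [D, a]\<close>. Splitting \<open>x = P0 x + D T x\<close> and using
  \<open>D P0 = 0 = P0 D\<close> gives \<open>[P0, a] = - P0 C T - T C P0\<close>. Since \<open>R = |D|\<^sup>-\<^sup>1\<close> and \<open>T\<close> are
  self-adjoint with \<open>R\<^sup>2 = T\<^sup>2\<close>, we have \<open>\<parallel>R x\<parallel> = \<parallel>T x\<parallel>\<close>. Hence \<open>R x \<mapsto> T x\<close> and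
  \<open>T x \<mapsto> R x\<close> extend, by the identity on \<open>ker D\<close>, to mutually inverse isometries \<open>W\<close>
  and \<open>W'\<close> of the whole space; moreover \<open>R W' = T\<close>, as \<open>R W' T = R\<^sup>2 = T\<^sup>2\<close>. Now
  \<open>\<alpha>0 = - C W\<close> and \<open>\<beta>0 = - W' C\<close> work: composing with an isometry on the left, or
  with a unitary on the right, preserves the operator norm.\<close>

lemma scaleC_zero_right [simp]: "scaleC c (0::'h::chilbert) = 0"
  using scaleC_add_right [of c 0 0] by simp

lemma scaleC_minus_right: "scaleC c (- x) = - scaleC c (x::'h::chilbert)"
  using scaleC_add_right [of c x "- x"] by (simp add: eq_neg_iff_add_eq_0 add.commute)

lemma scaleC_diff_right: "scaleC c (x - y) = scaleC c x - scaleC c (y::'h::chilbert)"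
  using scaleC_add_right [of c x "- y"] by (simp add: scaleC_minus_right)

lemma scaleC_minus_one [simp]: "scaleC (- 1) x = - (x::'h::chilbert)"
  using scaleC_of_real [of "- 1" x] by simp

lemma cinner_add_left: "cinner (x + y) z = cinner x z + cinner (y::'h::chilbert) z"
  by (metis cinner_commute cinner_add_right complex_cnj_add)

lemma cinner_zero_right [simp]: "cinner (x::'h::chilbert) 0 = 0"
  using cinner_add_right [of x 0 0] by simp

lemma cinner_zero_left [simp]: "cinner 0 (x::'h::chilbert) = 0"
  by (metis cinner_commute cinner_zero_right complex_cnj_zero)

lemma cinner_diff_right: "cinner x (y - z) = cinner x y - cinner (x::'h::chilbert) z"
  by (metis add_diff_cancel cinner_add_right diff_add_cancel)

lemma cinner_diff_left: "cinner (x - y) z = cinner x z - cinner (y::'h::chilbert) z"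
  by (metis cinner_commute cinner_diff_right complex_cnj_diff)

lemma cinner_scaleC_left: "cinner (scaleC c x) y = cnj c * cinner (x::'h::chilbert) y"
  by (metis cinner_commute cinner_scaleC_right complex_cnj_mult)

lemma cinner_self: "cinner x x = complex_of_real ((norm (x::'h::chilbert))\<^sup>2)"
  using cinner_ge_zero [of x] norm_eq_sqrt_cinner [of x] by (simp add: complex_eq_iff)

lemma cinner_self_eq_zero [simp]: "cinner x x = 0 \<longleftrightarrow> x = (0::'h::chilbert)"
  by (simp add: cinner_self)

lemma norm_eq_iff_cinner_self_eq:
  "norm x = norm y \<longleftrightarrow> cinner x x = cinner (y::'h::chilbert) y"
  by (simp add: cinner_self power2_eq_iff_nonneg del: of_real_power)

lemma norm_scaleC: "norm (scaleC c x) = cmod c * norm (x::'h::chilbert)"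
proof -
  have "cinner (scaleC c x) (scaleC c x) = (cnj c * c) * cinner x x"
    by (simp only: cinner_scaleC_left cinner_scaleC_right mult.assoc mult.left_commute)
  also have "cnj c * c = complex_of_real ((cmod c)\<^sup>2)"
    by (simp only: complex_norm_square mult.commute)
  finally have "(norm (scaleC c x))\<^sup>2 = (cmod c * norm x)\<^sup>2"
    by (simp only: cinner_self power_mult_distrib of_real_mult [symmetric] of_real_eq_iff)
  then show ?thesis by (simp add: power2_eq_iff_nonneg)
qed

lemma pythagoras:
  assumes "cinner x y = 0"
  shows "(norm (x + y))\<^sup>2 = (norm x)\<^sup>2 + (norm (y::'h::chilbert))\<^sup>2"
proof -
  have "cinner y x = 0" using assms cinner_commute [of y x] by simp
  then have "cinner (x + y) (x + y) = cinner x x + cinner y y"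
    using assms by (simp add: cinner_add_left cinner_add_right)
  then show ?thesis by (metis cinner_self of_real_add of_real_eq_iff)
qed

lemma clinear_add: "clinear f \<Longrightarrow> f (x + y) = f x + f y"
  unfolding clinear_def by blast

lemma clinear_scaleC: "clinear f \<Longrightarrow> f (scaleC c x) = scaleC c (f x)"
  unfolding clinear_def by blast

lemma clinear_zero: "clinear f \<Longrightarrow> f 0 = 0"
  by (metis add_cancel_right_right add_0 clinear_add)

lemma clinear_minus: "clinear f \<Longrightarrow> f (- x) = - f x"
  by (metis clinear_scaleC scaleC_minus_one)

lemma clinear_diff: "clinear f \<Longrightarrow> f (x - y) = f x - f y"
  by (metis clinear_add clinear_minus diff_conv_add_uminus)

lemma bop_clinear: "bop f \<Longrightarrow> clinear f"
  unfolding bop_def by blast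

lemma bop_bounded_linear:
  assumes "bop f"
  shows "bounded_linear f"
proof -
  have f: "clinear f" and "\<exists>K. \<forall>x. norm (f x) \<le> norm x * K"
    using assms by (simp_all add: bop_def)
  moreover have "f (scaleR r x) = scaleR r (f x)" for r x
    using clinear_scaleC [OF f, of "complex_of_real r"] by (simp add: scaleC_of_real)
  ultimately show ?thesis
    by (auto intro!: bounded_linear_intro simp: clinear_add)
qed

lemma bop_continuous_on: "bop f \<Longrightarrow> continuous_on S f"
  by (simp add: bop_bounded_linear linear_continuous_on)

lemma bop_add:
  assumes f: "bop f" and g: "bop g"
  shows "bop (\<lambda>x. f x + g x)"
proof -
  obtain K L where K: "\<And>x. norm (f x) \<le> norm x * K" and L: "\<And>x. norm (g x) \<le> norm x * L"
    using f g unfolding bop_def by blast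
  have "norm (f x + g x) \<le> norm x * (K + L)" for x
    using norm_triangle_ineq [of "f x" "g x"] K [of x] L [of x] by (simp add: distrib_left)
  moreover have "clinear (\<lambda>x. f x + g x)"
    using f g unfolding bop_def clinear_def by (simp add: scaleC_add_right)
  ultimately show ?thesis unfolding bop_def by blast
qed

lemma bop_comp:
  assumes f: "bop f" and g: "bop g"
  shows "bop (\<lambda>x. f (g x))"
proof -
  have "bounded_linear (\<lambda>x. f (g x))"
    using bounded_linear_compose [OF bop_bounded_linear [OF f] bop_bounded_linear [OF g]] .
  then obtain K where "\<And>x. norm (f (g x)) \<le> norm x * K"
    using bounded_linear.bounded by blast
  moreover have "clinear (\<lambda>x. f (g x))"
    using f g unfolding bop_def clinear_def by simp
  ultimately show ?thesis unfolding bop_def by blast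
qed

lemma bop_uminus: "bop f \<Longrightarrow> bop (\<lambda>x. - f x)"
  unfolding bop_def clinear_def by (auto simp: scaleC_minus_right)

lemma bop_scaleC: "bop (scaleC c :: 'h::chilbert \<Rightarrow> 'h)"
  unfolding bop_def clinear_def
  by (auto simp: scaleC_add_right norm_scaleC mult.commute intro!: exI [of _ "cmod c"])
    (metis scaleC_mult mult.commute)

definition isometric_op :: "('h::chilbert \<Rightarrow> 'h) \<Rightarrow> bool" where
  "isometric_op W \<longleftrightarrow> bop W \<and> (\<forall>x. norm (W x) = norm x)"

definition unitary_op :: "('h::chilbert \<Rightarrow> 'h) \<Rightarrow> bool" where
  "unitary_op W \<longleftrightarrow> isometric_op W \<and> surj W"

lemma onorm_isometric_comp: "isometric_op W \<Longrightarrow> onorm (\<lambda>x. W (f x)) = onorm f"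
  unfolding isometric_op_def onorm_def by simp

lemma onorm_comp_unitary:
  assumes "unitary_op W"
  shows "onorm (\<lambda>x. f (W x)) = onorm f"
proof -
  have "onorm (\<lambda>x. f (W x)) = (SUP x. norm (f (W x)) / norm (W x))"
    using assms unfolding unitary_op_def isometric_op_def onorm_def by simp
  also have "\<dots> = (SUP y\<in>range W. norm (f y) / norm y)"
    by (simp add: image_image)
  finally show ?thesis
    using assms unfolding unitary_op_def onorm_def by simp
qed

definition orth_proj :: "('h::chilbert \<Rightarrow> 'h) \<Rightarrow> bool" where
  "orth_proj P \<longleftrightarrow> bop P \<and> (\<forall>x. P (P x) = P x) \<and> (\<forall>x y. cinner (P x) y = cinner x (P y))"

lemma orth_proj_bop: "orth_proj P \<Longrightarrow> bop P"
  by (simp add: orth_proj_def)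

lemma orth_proj_clinear: "orth_proj P \<Longrightarrow> clinear P"
  by (simp add: orth_proj_def bop_clinear)

lemma orth_proj_idem [simp]: "orth_proj P \<Longrightarrow> P (P x) = P x"
  by (simp add: orth_proj_def)

lemma orth_proj_self_adjoint: "orth_proj P \<Longrightarrow> cinner (P x) y = cinner x (P y)"
  by (simp add: orth_proj_def)

lemma orth_proj_pythagoras:
  assumes "orth_proj P"
  shows "(norm y)\<^sup>2 = (norm (P y))\<^sup>2 + (norm (y - P y))\<^sup>2"
proof -
  have "cinner (P y) (y - P y) = 0"
    using assms by (simp add: orth_proj_self_adjoint [symmetric] cinner_diff_right
        clinear_diff [OF orth_proj_clinear])
  from pythagoras [OF this] show ?thesis by simp
qed

context
  fixes P :: "'h::chilbert \<Rightarrow> 'h" and S :: "'h set"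
  assumes P: "orth_proj_onto P S"
begin

lemma orth_proj_onto_fixes:
  assumes diff: "\<And>s t. s \<in> S \<Longrightarrow> t \<in> S \<Longrightarrow> s - t \<in> S" and "s \<in> S"
  shows "P s = s"
proof -
  have "s - P s \<in> S" using diff [OF \<open>s \<in> S\<close>] P by (simp add: orth_proj_onto_def)
  then have "cinner (s - P s) (s - P s) = 0" using P by (simp add: orth_proj_onto_def)
  then show ?thesis by simp
qed

lemma orth_proj_onto_eq_zero:
  assumes "\<forall>s\<in>S. cinner s w = 0"
  shows "P w = 0"
proof -
  have "cinner (P w) (P w) = cinner (P w) w - cinner (P w) (w - P w)"
    by (simp add: cinner_diff_right)
  also have "\<dots> = 0" using assms P by (simp add: orth_proj_onto_def)
  finally show ?thesis by simp
qed

lemma orth_proj_onto_imp_orth_proj: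
  assumes diff: "\<And>s t. s \<in> S \<Longrightarrow> t \<in> S \<Longrightarrow> s - t \<in> S"
  shows "orth_proj P"
proof -
  have inS: "P x \<in> S" and orth: "cinner (P x) (y - P y) = 0" for x y
    using P by (simp_all add: orth_proj_onto_def)
  have "cinner (P x) y = cinner (P x) (P y)" for x y
    using orth [of x y] by (simp add: cinner_diff_right)
  moreover have "cinner x (P y) = cinner (P x) (P y)" for x y
    using orth [of y x] cinner_commute [of "P y" "x - P x"] by (simp add: cinner_diff_left)
  ultimately show ?thesis
    using P orth_proj_onto_fixes [OF diff inS] by (simp add: orth_proj_def orth_proj_onto_def)
qed

end

lemma bop_eq_on_closure:
  assumes "bop f" "bop g" "\<forall>x\<in>S. f x = g x" "x \<in> closure S"
  shows "f x = g x"
proof -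
  have "closure S \<subseteq> {x. f x = g x}"
    using assms by (intro closure_minimal closed_Collect_eq bop_continuous_on) auto
  then show ?thesis using assms(4) by blast
qed

lemma bop_eq_by_density:
  assumes P: "orth_proj P" and f: "bop f" and g: "bop g"
    and dense: "\<And>y. y - P y \<in> closure (range X)"
    and on_X: "\<And>x. f (X x) = g (X x)" and on_P: "\<And>y. f (P y) = g (P y)"
  shows "f y = g y"
proof -
  have "f (y - P y) = g (y - P y)"
    using bop_eq_on_closure [OF f g _ dense] on_X by blast
  then show ?thesis
    using on_P [of y] by (metis bop_clinear clinear_diff diff_eq_eq f g)
qed

lemma closure_range_add:
  fixes F :: "'a::plus \<Rightarrow> 'b::real_normed_vector"
  assumes "\<And>x y. F (x + y) = F x + F y" "p \<in> closure (range F)" "q \<in> closure (range F)"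
  shows "p + q \<in> closure (range F)"
proof -
  have "(\<lambda>r. fst r + snd r) ` closure (range F \<times> range F) \<subseteq> closure (range F)"
  proof (rule image_closure_subset)
    show "(\<lambda>r. fst r + snd r) ` (range F \<times> range F) \<subseteq> closure (range F)"
      using assms(1) closure_subset by (fastforce simp flip: assms(1))
  qed (auto intro!: continuous_intros)
  then show ?thesis using assms(2,3) by (force simp: closure_Times)
qed

lemma closure_range_map:
  assumes "continuous_on UNIV g" "\<And>x. g (F x) = F (s x)" "p \<in> closure (range F)"
  shows "g p \<in> closure (range F)"
proof -
  have "g ` closure (range F) \<subseteq> closure (range F)"
    by (rule image_closure_subset)
      (use assms in \<open>auto intro: continuous_on_subset closure_subset [THEN subsetD]\<close>)
  then show ?thesis using assms(3) by blast
qed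

lemma bop_id: "bop (\<lambda>x. x)"
  unfolding bop_def clinear_def by (auto intro: exI [of _ 1])

lemma closure_graph_total:
  assumes X: "bop X" and Y: "bop Y" and norm_XY: "\<And>x. norm (X x) = norm (Y x)"
    and u: "u \<in> closure (range X)"
  shows "\<exists>v. (u, v) \<in> closure (range (\<lambda>x. (X x, Y x)))"
proof -
  obtain s where s: "\<forall>n. s n \<in> range X" "s \<longlonglongrightarrow> u"
    using u unfolding closure_sequential by blast
  then have "\<forall>n. \<exists>z. s n = X z"
    by blast
  then obtain w where "\<forall>n. s n = X (w n)"
    unfolding choice_iff by blast
  then have "s = (\<lambda>n. X (w n))"
    by (intro ext) simp
  with s(2) have w: "(\<lambda>n. X (w n)) \<longlonglongrightarrow> u"
    by simp
  have "Cauchy (\<lambda>n. Y (w n))"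
  proof (rule CauchyI)
    fix e :: real assume "0 < e"
    then obtain M where "\<forall>m\<ge>M. \<forall>n\<ge>M. norm (X (w m) - X (w n)) < e"
      using CauchyD [OF LIMSEQ_imp_Cauchy [OF w]] by blast
    moreover have "norm (Y (w m) - Y (w n)) = norm (X (w m) - X (w n))" for m n
      using norm_XY [of "w m - w n"] X Y by (simp add: clinear_diff bop_clinear)
    ultimately show "\<exists>M. \<forall>m\<ge>M. \<forall>n\<ge>M. norm (Y (w m) - Y (w n)) < e" by auto
  qed
  then obtain v where "(\<lambda>n. Y (w n)) \<longlonglongrightarrow> v"
    unfolding Cauchy_convergent_iff convergent_def by blast
  then have "(\<lambda>n. (X (w n), Y (w n))) \<longlonglongrightarrow> (u, v)"
    using w by (rule tendsto_Pair [rotated])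
  moreover have "\<forall>n. (X (w n), Y (w n)) \<in> range (\<lambda>x. (X x, Y x))"
    by blast
  ultimately have "(u, v) \<in> closure (range (\<lambda>x. (X x, Y x)))"
    unfolding closure_sequential by (intro exI [of _ "\<lambda>n. (X (w n), Y (w n))"] conjI)
  then show ?thesis ..
qed

lemma closure_graph_add:
  assumes "clinear X" "clinear Y"
    and "p \<in> closure (range (\<lambda>x. (X x, Y x)))" "q \<in> closure (range (\<lambda>x. (X x, Y x)))"
  shows "p + q \<in> closure (range (\<lambda>x. (X x, Y x)))"
  using closure_range_add [of "\<lambda>x. (X x, Y x)"] assms by (simp add: clinear_add)

lemma closure_graph_scaleC:
  fixes X Y :: "'h::chilbert \<Rightarrow> 'h"
  assumes "clinear X" "clinear Y" and "(u, v) \<in> closure (range (\<lambda>x. (X x, Y x)))"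
  shows "(scaleC c u, scaleC c v) \<in> closure (range (\<lambda>x. (X x, Y x)))"
proof -
  have "continuous_on UNIV (\<lambda>p::'h \<times> 'h. (scaleC c (fst p), scaleC c (snd p)))"
    by (intro continuous_on_Pair continuous_on_compose2 [OF bop_continuous_on [OF bop_scaleC]]
        continuous_on_fst continuous_on_snd continuous_on_id) auto
  moreover have "(scaleC c (X x), scaleC c (Y x)) = (X (scaleC c x), Y (scaleC c x))" for x
    using assms by (simp add: clinear_scaleC)
  ultimately show ?thesis
    using assms closure_range_map [of "\<lambda>p. (scaleC c (fst p), scaleC c (snd p))"
        "\<lambda>x. (X x, Y x)" "scaleC c" "(u, v)"]
    by simp
qed

lemma closure_graph_closed_property:
  assumes "closed {p. \<Phi> p}" "\<And>x. \<Phi> (X x, Y x)"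
    and "p \<in> closure (range (\<lambda>x. (X x, Y x)))"
  shows "\<Phi> p"
  using closure_minimal [of "range (\<lambda>x. (X x, Y x))" "{p. \<Phi> p}"] assms by auto

lemma closure_graph_norm_eq:
  fixes X Y :: "'a \<Rightarrow> 'b::real_normed_vector"
  assumes "\<And>x. norm (X x) = norm (Y x)" and "(u, v) \<in> closure (range (\<lambda>x. (X x, Y x)))"
  shows "norm v = norm u"
proof -
  have "closed {p::'b \<times> 'b. norm (snd p) = norm (fst p)}"
    by (intro closed_Collect_eq continuous_intros)
  then show ?thesis
    using closure_graph_closed_property [of "\<lambda>p. norm (snd p) = norm (fst p)" X Y "(u, v)"] assms
    by simp
qed

lemma closure_graph_unique:
  fixes X Y :: "'h::chilbert \<Rightarrow> 'h"
  assumes X: "bop X" and Y: "bop Y" and norm_XY: "\<And>x. norm (X x) = norm (Y x)"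
    and "(u, v) \<in> closure (range (\<lambda>x. (X x, Y x)))" "(u, v') \<in> closure (range (\<lambda>x. (X x, Y x)))"
  shows "v = v'"
proof -
  have "(u, v) + (scaleC (- 1) u, scaleC (- 1) v') \<in> closure (range (\<lambda>x. (X x, Y x)))"
    using assms by (intro closure_graph_add closure_graph_scaleC bop_clinear)
  then show ?thesis
    using closure_graph_norm_eq [OF norm_XY, of 0 "v - v'"] by simp
qed

lemma partial_isometry_extension:
  fixes P X Y :: "'h::chilbert \<Rightarrow> 'h"
  assumes P: "orth_proj P" and X: "bop X" and Y: "bop Y"
    and norm_XY: "\<And>x. norm (X x) = norm (Y x)"
    and PX: "\<And>x. P (X x) = 0" and PY: "\<And>x. P (Y x) = 0"
    and dense: "\<And>y. y - P y \<in> closure (range X)"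
  shows "\<exists>Z. bop Z \<and> (\<forall>y. norm (Z y) = norm (y - P y)) \<and> (\<forall>x. Z (X x) = Y x) \<and>
    (\<forall>y. P (Z y) = 0)"
proof -
  define G where "G = closure (range (\<lambda>x. (X x, Y x)))"
  define Z where "Z y = (THE v. (y - P y, v) \<in> G)" for y
  have Z_eq: "Z y = v" if "(y - P y, v) \<in> G" for y v
    unfolding Z_def using that closure_graph_unique [OF X Y norm_XY _ that [unfolded G_def]]
    by (rule the_equality) (simp add: G_def)
  have Z_graph: "(y - P y, Z y) \<in> G" for y
    using closure_graph_total [OF X Y norm_XY dense, of y] Z_eq unfolding G_def by metis
  have lin: "clinear P" "clinear X" "clinear Y"
    using P X Y by (simp_all add: orth_proj_clinear bop_clinear)
  have "clinear Z"
    unfolding clinear_def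
  proof (intro conjI allI)
    fix y y'
    have "y + y' - P (y + y') = (y - P y) + (y' - P y')"
      by (simp add: clinear_add [OF lin(1)])
    then show "Z (y + y') = Z y + Z y'"
      using closure_graph_add [OF lin(2,3) Z_graph [of y, unfolded G_def]
          Z_graph [of y', unfolded G_def], folded G_def]
      by (intro Z_eq) (simp only: add_Pair)
  next
    fix c y
    show "Z (scaleC c y) = scaleC c (Z y)"
      using closure_graph_scaleC [OF lin(2,3) Z_graph [of y, unfolded G_def], of c, folded G_def]
      by (intro Z_eq) (simp add: clinear_scaleC [OF lin(1)] scaleC_diff_right)
  qed
  moreover have Z_norm: "norm (Z y) = norm (y - P y)" for y
    using closure_graph_norm_eq [OF norm_XY Z_graph [unfolded G_def]] .
  moreover have "norm (Z y) \<le> norm y * 1" for y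
  proof -
    have "(norm (y - P y))\<^sup>2 \<le> (norm y)\<^sup>2"
      using orth_proj_pythagoras [OF P, of y] by simp
    then show ?thesis
      unfolding Z_norm mult_1_right by (rule power2_le_imp_le) simp
  qed
  ultimately have "bop Z"
    unfolding bop_def by blast
  moreover have "Z (X x) = Y x" for x
  proof (rule Z_eq)
    show "(X x - P (X x), Y x) \<in> G"
      unfolding G_def PX diff_zero by (rule closure_subset [THEN subsetD]) blast
  qed
  moreover have "P (Z y) = 0" for y
  proof -
    have "closed {p::'h \<times> 'h. P (snd p) = 0}"
      by (intro closed_Collect_eq continuous_intros
          continuous_on_compose2 [OF bop_continuous_on [OF orth_proj_bop [OF P]]]) auto
    then show ?thesis
      using closure_graph_closed_property [of "\<lambda>p. P (snd p) = 0" X Y "(y - P y, Z y)"]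
        PY Z_graph [unfolded G_def] by simp
  qed
  ultimately show ?thesis
    using Z_norm by blast
qed

lemma isometric_extension:
  fixes P X Y :: "'h::chilbert \<Rightarrow> 'h"
  assumes P: "orth_proj P" and X: "bop X" and Y: "bop Y"
    and norm_XY: "\<And>x. norm (X x) = norm (Y x)"
    and PX: "\<And>x. P (X x) = 0" and PY: "\<And>x. P (Y x) = 0"
    and dense: "\<And>y. y - P y \<in> closure (range X)"
  shows "\<exists>W. isometric_op W \<and> (\<forall>x. W (X x) = Y x) \<and> (\<forall>y. W (P y) = P y)"
proof -
  obtain Z where Z: "bop Z" "\<And>y. norm (Z y) = norm (y - P y)" "\<And>x. Z (X x) = Y x"
    "\<And>y. P (Z y) = 0"
    using partial_isometry_extension [OF assms] by blast
  have ZP: "Z (P y) = 0" for y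
    using Z(2) [of "P y"] P by simp
  have "norm (Z y + P y) = norm y" for y
  proof -
    have "cinner (Z y) (P y) = 0"
      using Z(4) by (simp add: orth_proj_self_adjoint [OF P, symmetric])
    then have "(norm (Z y + P y))\<^sup>2 = (norm y)\<^sup>2"
      using pythagoras [of "Z y" "P y"] orth_proj_pythagoras [OF P, of y] Z(2) by simp
    then show ?thesis by (simp add: power2_eq_iff_nonneg)
  qed
  then have "isometric_op (\<lambda>y. Z y + P y)"
    unfolding isometric_op_def using bop_add [OF Z(1) orth_proj_bop [OF P]] by blast
  then show ?thesis
    using Z(3) PX ZP P by (intro exI [of _ "\<lambda>y. Z y + P y"]) simp
qed

text \<open>Applying the extension in both directions gives mutually inverse isometries.\<close>
lemma unitary_extension:
  fixes P X Y :: "'h::chilbert \<Rightarrow> 'h"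
  assumes P: "orth_proj P" and X: "bop X" and Y: "bop Y"
    and norm_XY: "\<And>x. norm (X x) = norm (Y x)"
    and PX: "\<And>x. P (X x) = 0" and PY: "\<And>x. P (Y x) = 0"
    and dense_X: "\<And>y. y - P y \<in> closure (range X)"
    and dense_Y: "\<And>y. y - P y \<in> closure (range Y)"
  shows "\<exists>W. unitary_op W \<and> (\<forall>x. W (X x) = Y x)"
proof -
  obtain W where W: "isometric_op W" "\<And>x. W (X x) = Y x" "\<And>y. W (P y) = P y"
    using isometric_extension [OF P X Y norm_XY PX PY dense_X] by blast
  obtain W' where W': "isometric_op W'" "\<And>x. W' (Y x) = X x" "\<And>y. W' (P y) = P y"
    using isometric_extension [OF P Y X norm_XY [symmetric] PY PX dense_Y] by blast
  have "W (W' y) = y" for y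
    using bop_eq_by_density [OF P bop_comp bop_id dense_Y] W W'
    unfolding isometric_op_def by simp
  then have "surj W"
    by (metis surjI)
  then show ?thesis
    using W unfolding unitary_op_def by blast
qed

text \<open>Polarization; this needs complex scalars.\<close>
lemma positive_op_self_adjoint:
  assumes "positive_op R"
  shows "cinner (R x) y = cinner x (R y)"
proof -
  have R: "clinear R" and real: "\<And>z. Im (cinner z (R z)) = 0"
    using assms by (simp_all add: positive_op_def bop_def)
  define p where "p = cinner x (R y)"
  define q where "q = cinner y (R x)"
  have "cinner (x + y) (R (x + y)) = cinner x (R x) + p + q + cinner y (R y)"
    unfolding p_def q_def by (simp add: clinear_add [OF R] cinner_add_left cinner_add_right)
  then have "Im (p + q) = 0"
    using real [of "x + y"] real [of x] real [of y] by simp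
  moreover have "cinner (x + scaleC \<i> y) (R (x + scaleC \<i> y)) =
      cinner x (R x) + \<i> * p - \<i> * q + cinner y (R y)"
    unfolding p_def q_def
    by (simp add: clinear_add [OF R] clinear_scaleC [OF R] cinner_add_left cinner_add_right
        cinner_scaleC_left cinner_scaleC_right ring_distribs)
  then have "Re p = Re q"
    using real [of "x + scaleC \<i> y"] real [of x] real [of y] by simp
  ultimately have "p = cnj q"
    by (simp add: complex_eq_iff)
  then show ?thesis
    unfolding p_def q_def by (metis cinner_commute)
qed

locale Dinv =
  fixes domD :: "'h::chilbert set" and D P0 T :: "'h \<Rightarrow> 'h"
  assumes self_adjoint: "self_adjoint_op domD D"
    and P0: "orth_proj_onto P0 (ker_op domD D)"
    and T: "is_Dinv domD D P0 T"
begin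

lemma bop_T: "bop T"
  and T_P0 [simp]: "T (P0 x) = 0"
  and T_in_dom: "T y \<in> domD"
  and D_T [simp]: "D (T y) = y - P0 y"
  and T_D: "z \<in> domD \<Longrightarrow> T (D z) = z - P0 z"
  using T by (simp_all add: is_Dinv_def)

lemma dom_add: "x \<in> domD \<Longrightarrow> y \<in> domD \<Longrightarrow> x + y \<in> domD"
  and dom_scaleC: "x \<in> domD \<Longrightarrow> scaleC c x \<in> domD"
  and D_add: "x \<in> domD \<Longrightarrow> y \<in> domD \<Longrightarrow> D (x + y) = D x + D y"
  and D_scaleC: "x \<in> domD \<Longrightarrow> D (scaleC c x) = scaleC c (D x)"
  and D_symmetric: "x \<in> domD \<Longrightarrow> y \<in> domD \<Longrightarrow> cinner (D x) y = cinner x (D y)"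
  and dom_dense: "closure domD = UNIV"
  using self_adjoint by (simp_all add: self_adjoint_op_def)

lemma P0_in_ker: "P0 x \<in> domD" "D (P0 x) = 0"
  using P0 by (simp_all add: orth_proj_onto_def ker_op_def)

lemma ker_diff:
  assumes "s \<in> ker_op domD D" "t \<in> ker_op domD D"
  shows "s - t \<in> ker_op domD D"
proof -
  have s: "s \<in> domD" "D s = 0" and t: "t \<in> domD" "D t = 0"
    using assms by (simp_all add: ker_op_def)
  then have "- t \<in> domD" "D (- t) = 0"
    using dom_scaleC [of t "- 1"] D_scaleC [of t "- 1"] by simp_all
  with s show ?thesis
    using dom_add [of s "- t"] D_add [of s "- t"] by (simp add: ker_op_def)
qed

lemma orth_proj_P0: "orth_proj P0"
  using P0 ker_diff by (rule orth_proj_onto_imp_orth_proj)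

lemma P0_D:
  assumes "z \<in> domD"
  shows "P0 (D z) = 0"
proof (rule orth_proj_onto_eq_zero [OF P0], intro ballI)
  fix s assume "s \<in> ker_op domD D"
  then show "cinner s (D z) = 0"
    using D_symmetric [of s z] assms by (simp add: ker_op_def)
qed

lemma P0_T [simp]: "P0 (T x) = 0"
  using T_D [OF T_in_dom, of x] bop_T by (simp add: clinear_diff bop_clinear)

lemma T_self_adjoint: "cinner (T x) y = cinner x (T y)"
proof -
  have orth: "cinner (T x) (P0 y) = 0" "cinner (P0 x) (T y) = 0"
    using orth_proj_self_adjoint [OF orth_proj_P0, of "T x" y]
      orth_proj_self_adjoint [OF orth_proj_P0, of x "T y"] by simp_all
  have "cinner (T x) y = cinner (T x) (y - P0 y)"
    using orth by (simp add: cinner_diff_right)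
  also have "\<dots> = cinner (D (T x)) (T y)"
    using D_symmetric [OF T_in_dom T_in_dom] by simp
  also have "\<dots> = cinner x (T y)"
    using orth by (simp add: cinner_diff_left)
  finally show ?thesis .
qed

lemma range_T_dense: "y - P0 y \<in> closure (range T)"
proof -
  have "(\<lambda>z. z - P0 z) ` domD \<subseteq> range T"
  proof (rule image_subsetI)
    fix z assume "z \<in> domD"
    then have "z - P0 z = T (D z)" by (simp add: T_D)
    then show "z - P0 z \<in> range T" by simp
  qed
  moreover have "continuous_on (closure domD) (\<lambda>z. z - P0 z)"
    by (intro continuous_intros bop_continuous_on orth_proj_bop orth_proj_P0)
  ultimately have "(\<lambda>z. z - P0 z) ` closure domD \<subseteq> closure (range T)"
    using closure_subset by (intro image_closure_subset) blast+
  then show ?thesis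
    by (auto simp: dom_dense)
qed

text \<open>With \<open>C = [D, a]\<close>: \<open>P0 a (I - P0) = P0 a D T = - P0 C T\<close> and
  \<open>(I - P0) a P0 = T D a P0 = T C P0\<close>.\<close>
lemma commutator_P0_eq:
  assumes a: "bop a" "a ` domD \<subseteq> domD" and C: "\<forall>z\<in>domD. C z = D (a z) - a (D z)"
  shows "P0 (a x) - a (P0 x) = - P0 (C (T x)) - T (C (P0 x))"
proof -
  have la: "clinear a" and lP: "clinear P0"
    using a(1) orth_proj_P0 by (simp_all add: bop_clinear orth_proj_clinear)
  have "a x = a (P0 x) + a (D (T x))"
    using clinear_add [OF la, of "P0 x" "D (T x)"] by simp
  also have "a (D (T x)) = D (a (T x)) - C (T x)"
    using C T_in_dom by simp
  finally have "P0 (a x) = P0 (a (P0 x)) - P0 (C (T x))"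
    using P0_D a(2) T_in_dom by (auto simp: clinear_add [OF lP] clinear_diff [OF lP])
  then have "P0 (a x) - a (P0 x) = - P0 (C (T x)) - (a (P0 x) - P0 (a (P0 x)))"
    by (simp add: algebra_simps)
  also have "a (P0 x) - P0 (a (P0 x)) = T (C (P0 x))"
  proof -
    have "a (P0 x) \<in> domD"
      using a(2) P0_in_ker(1) by blast
    moreover have "C (P0 x) = D (a (P0 x))"
      using C P0_in_ker by (simp add: clinear_zero [OF la])
    ultimately show ?thesis
      by (simp add: T_D)
  qed
  finally show ?thesis .
qed

end

locale absDinv = Dinv domD D P0 T
  for domD :: "'h::chilbert set" and D P0 T :: "'h \<Rightarrow> 'h" +
  fixes R :: "'h \<Rightarrow> 'h"
  assumes R_pos: "positive_op R" and R_sq: "R \<circ> R = T \<circ> T"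
begin

lemma bop_R: "bop R"
  using R_pos by (simp add: positive_op_def)

lemma norm_R: "norm (R x) = norm (T x)"
  using R_sq positive_op_self_adjoint [OF R_pos, of x "R x"] T_self_adjoint [of x "T x"]
  by (simp add: norm_eq_iff_cinner_self_eq fun_eq_iff)

lemma R_P0 [simp]: "R (P0 x) = 0"
  using norm_R [of "P0 x"] by simp

lemma P0_R [simp]: "P0 (R x) = 0"
proof (rule orth_proj_onto_eq_zero [OF P0], intro ballI)
  fix s assume "s \<in> ker_op domD D"
  then have "R s = 0"
    using R_P0 orth_proj_onto_fixes [OF P0 ker_diff] by metis
  then show "cinner s (R x) = 0"
    using positive_op_self_adjoint [OF R_pos, of s x] by simp
qed

lemma T_eq_R_comp_isometry: "\<exists>W. isometric_op W \<and> (\<forall>x. R (W x) = T x)"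
proof -
  obtain W where W: "isometric_op W" "\<And>x. W (T x) = R x" "\<And>y. W (P0 y) = P0 y"
    using isometric_extension [OF orth_proj_P0 bop_T bop_R norm_R [symmetric] P0_T P0_R
        range_T_dense] by blast
  have "R (W y) = T y" for y
    using bop_eq_by_density [OF orth_proj_P0 bop_comp [OF bop_R] bop_T range_T_dense] W R_sq
    unfolding isometric_op_def by (simp add: fun_eq_iff)
  with W(1) show ?thesis by blast
qed

lemma range_R_dense: "y - P0 y \<in> closure (range R)"
proof -
  obtain W where "\<forall>x. R (W x) = T x"
    using T_eq_R_comp_isometry by blast
  then have "range T \<subseteq> range R"
    by (metis image_subsetI rangeI)
  then show ?thesis
    using range_T_dense closure_mono by blast
qed

lemma T_eq_unitary_comp_R: "\<exists>W. unitary_op W \<and> (\<forall>x. W (R x) = T x)"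
  using unitary_extension [OF orth_proj_P0 bop_R bop_T norm_R P0_R P0_T range_R_dense
      range_T_dense] .

end

theorem lemma2p2:
  fixes A :: "('h::chilbert \<Rightarrow> 'h) set" and domD :: "'h set" and D :: "'h \<Rightarrow> 'h"
    and P0 R a C :: "'h \<Rightarrow> 'h"
  assumes st: "spectral_triple A domD D"
    and ed: "essentially_discrete domD D"
    and P0: "orth_proj_onto P0 (ker_op domD D)"
    and R: "is_absDinv domD D P0 R"
    and a: "a \<in> A"
    and C: "bop C" "\<forall>x\<in>domD. C x = D (a x) - a (D x)"
  shows "\<exists>\<alpha>0 \<beta>0. bop \<alpha>0 \<and> bop \<beta>0 \<and> onorm \<alpha>0 = onorm C \<and> onorm \<beta>0 = onorm C \<and>
           (\<forall>x. P0 (a x) - a (P0 x) = P0 (\<alpha>0 (R x)) + R (\<beta>0 (P0 x)))"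
proof -
  obtain T where T: "is_Dinv domD D P0 T" and R_pos: "positive_op R" and R_sq: "R \<circ> R = T \<circ> T"
    using R unfolding is_absDinv_def by blast
  interpret absDinv domD D P0 T R
    using st P0 T R_pos R_sq by unfold_locales (simp_all add: spectral_triple_def)
  obtain W where W: "unitary_op W" "\<And>x. W (R x) = T x"
    using T_eq_unitary_comp_R by blast
  obtain W' where W': "isometric_op W'" "\<And>x. R (W' x) = T x"
    using T_eq_R_comp_isometry by blast
  have a: "bop a" "a ` domD \<subseteq> domD"
    using st a by (auto simp: spectral_triple_def star_algebra_def)
  have "bop W" "bop W'"
    using W(1) W'(1) by (simp_all add: unitary_op_def isometric_op_def)
  then have "bop (\<lambda>x. - C (W x))" "bop (\<lambda>x. - W' (C x))"
    using C(1) by (simp_all add: bop_uminus bop_comp)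
  moreover have "onorm (\<lambda>x. - C (W x)) = onorm C" "onorm (\<lambda>x. - W' (C x)) = onorm C"
    using onorm_comp_unitary [OF W(1)] onorm_isometric_comp [OF W'(1)] by (simp_all add: onorm_neg)
  moreover have "P0 (a x) - a (P0 x) = P0 (- C (W (R x))) + R (- W' (C (P0 x)))" for x
    using commutator_P0_eq [OF a C(2)] W(2) W'(2) bop_R orth_proj_P0
    by (simp add: clinear_minus bop_clinear orth_proj_clinear)
  ultimately show ?thesis
    by blast
qed

end
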